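(* Let $G$ be a countable group which is icc or torsion-free, and let $A$ be a finite set. Then every strongly irreducible subshift $Z\subseteq A^G$ containing a non-constant element is essentially free.
   Context: $A^G$ has the product topology and the action $(g\cdot z)(h)=z(hg)$; a subshift is a non-empty closed $G$-invariant subset. For finite $D\subseteq G$, two sets $E_1,E_2\subseteq G$ are $D$-apart if $DE_1\cap DE_2=\emptyset$. A subshift $Z$ is strongly irreducible if there is a finite $D\subseteq G$ such that for all finite $E_1,E_2\subseteq G$ that are $D$-apart and all $z_1,z_2\in Z$, there is $x\in Z$ with $x|_{E_i}=z_i|_{E_i}$ for $i=1,2$. A flow is essentially free if for every $g\neq e$ the set of points fixed by $g$ has empty interior. A group is icc if every non-identity element has infinite conjugacy class. *)

theory Defs
  imports "HOL-Analysis.Analysis" "HOL-Algebra.Coset"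
begin

definition shift_act :: "('g, 'm) monoid_scheme \<Rightarrow> 'g \<Rightarrow> ('g \<Rightarrow> 'a) \<Rightarrow> ('g \<Rightarrow> 'a)" where
  "shift_act G g z = (\<lambda>h\<in>carrier G. z (h \<otimes>\<^bsub>G\<^esub> g))"

definition full_shift_top :: "('g, 'm) monoid_scheme \<Rightarrow> 'a set \<Rightarrow> ('g \<Rightarrow> 'a) topology" where
  "full_shift_top G A = product_topology (\<lambda>_. discrete_topology A) (carrier G)"

definition subshift :: "('g, 'm) monoid_scheme \<Rightarrow> 'a set \<Rightarrow> ('g \<Rightarrow> 'a) set \<Rightarrow> bool" where
  "subshift G A Z \<longleftrightarrow> Z \<noteq> {} \<and> Z \<subseteq> (\<Pi>\<^sub>E h\<in>carrier G. A) \<and>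
     closedin (full_shift_top G A) Z \<and>
     (\<forall>g\<in>carrier G. \<forall>z\<in>Z. shift_act G g z \<in> Z)"

definition strongly_irreducible :: "('g, 'm) monoid_scheme \<Rightarrow> ('g \<Rightarrow> 'a) set \<Rightarrow> bool" where
  "strongly_irreducible G Z \<longleftrightarrow>
     (\<exists>D. finite D \<and> D \<subseteq> carrier G \<and>
       (\<forall>E1 E2. finite E1 \<and> finite E2 \<and> E1 \<subseteq> carrier G \<and> E2 \<subseteq> carrier G \<and>
          (D <#>\<^bsub>G\<^esub> E1) \<inter> (D <#>\<^bsub>G\<^esub> E2) = {} \<longrightarrow>
          (\<forall>z1\<in>Z. \<forall>z2\<in>Z. \<exists>x\<in>Z. (\<forall>h\<in>E1. x h = z1 h) \<and> (\<forall>h\<in>E2. x h = z2 h))))"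

definition essentially_free :: "('g, 'm) monoid_scheme \<Rightarrow> 'a set \<Rightarrow> ('g \<Rightarrow> 'a) set \<Rightarrow> bool" where
  "essentially_free G A Z \<longleftrightarrow>
     (\<forall>g\<in>carrier G. g \<noteq> \<one>\<^bsub>G\<^esub> \<longrightarrow>
        (subtopology (full_shift_top G A) Z) interior_of {z\<in>Z. shift_act G g z = z} = {})"

definition icc_group :: "('g, 'm) monoid_scheme \<Rightarrow> bool" where
  "icc_group G \<longleftrightarrow> (\<forall>g\<in>carrier G. g \<noteq> \<one>\<^bsub>G\<^esub> \<longrightarrow>
     infinite {k \<otimes>\<^bsub>G\<^esub> g \<otimes>\<^bsub>G\<^esub> inv\<^bsub>G\<^esub> k | k. k \<in> carrier G})"

definition torsion_free_group :: "('g, 'm) monoid_scheme \<Rightarrow> bool" where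
  "torsion_free_group G \<longleftrightarrow> (\<forall>g\<in>carrier G. g \<noteq> \<one>\<^bsub>G\<^esub> \<longrightarrow>
     (\<forall>n::nat. n > 0 \<longrightarrow> g [^]\<^bsub>G\<^esub> n \<noteq> \<one>\<^bsub>G\<^esub>))"

end

theory Submission
  imports Defs
begin

text \<open>Suppose some g \<noteq> 1 fixes every point of a nonempty open subset of Z, hence of a cylinder:
  every x \<in> Z agreeing with some z0 on a finite window F satisfies x(k g^n) = x(k) for all k, n.
  Choose h and n such that {h}, {h g^n} and F are pairwise D-apart, D being the window of strong
  irreducibility: in the icc case because g has infinitely many conjugates h g h^-1, in the
  torsion-free case because the powers of g are pairwise distinct. Gluing twice produces x \<in> Z
  that agrees with z0 on F but carries different symbols at h and h g^n, a contradiction.\<close>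

definition gluing_window :: "('g, 'm) monoid_scheme \<Rightarrow> 'g set \<Rightarrow> ('g \<Rightarrow> 'a) set \<Rightarrow> bool" where
  "gluing_window G D Z \<longleftrightarrow>
     (\<forall>E1 E2. finite E1 \<and> finite E2 \<and> E1 \<subseteq> carrier G \<and> E2 \<subseteq> carrier G \<and>
        (D <#>\<^bsub>G\<^esub> E1) \<inter> (D <#>\<^bsub>G\<^esub> E2) = {} \<longrightarrow>
        (\<forall>z1\<in>Z. \<forall>z2\<in>Z. \<exists>x\<in>Z. (\<forall>h\<in>E1. x h = z1 h) \<and> (\<forall>h\<in>E2. x h = z2 h)))"

lemma strongly_irreducible_iff_gluing_window:
  "strongly_irreducible G Z \<longleftrightarrow> (\<exists>D. finite D \<and> D \<subseteq> carrier G \<and> gluing_window G D Z)"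
  unfolding strongly_irreducible_def gluing_window_def ..

lemma gluing_windowD:
  assumes "gluing_window G D Z" "finite E1" "finite E2" "E1 \<subseteq> carrier G" "E2 \<subseteq> carrier G"
    and "(D <#>\<^bsub>G\<^esub> E1) \<inter> (D <#>\<^bsub>G\<^esub> E2) = {}" "z1 \<in> Z" "z2 \<in> Z"
  obtains x where "x \<in> Z" "\<And>h. h \<in> E1 \<Longrightarrow> x h = z1 h" "\<And>h. h \<in> E2 \<Longrightarrow> x h = z2 h"
proof -
  have "\<exists>x\<in>Z. (\<forall>h\<in>E1. x h = z1 h) \<and> (\<forall>h\<in>E2. x h = z2 h)"
    using assms unfolding gluing_window_def by simp
  with that show thesis by blast
qed

lemma interior_of_shift_space_contains_cylinder:
  assumes ZA: "Z \<subseteq> (\<Pi>\<^sub>E h\<in>carrier G. A)"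
    and z0: "z0 \<in> subtopology (full_shift_top G A) Z interior_of S"
  obtains F where "finite F" "F \<subseteq> carrier G" "z0 \<in> Z"
    "\<And>x. x \<in> Z \<Longrightarrow> (\<forall>f\<in>F. x f = z0 f) \<Longrightarrow> x \<in> S"
proof -
  obtain V where V: "openin (full_shift_top G A) V" "z0 \<in> V \<inter> Z" "V \<inter> Z \<subseteq> S"
    using z0 by (auto simp: interior_of_def openin_subtopology)
  then obtain U where U: "finite {i \<in> carrier G. U i \<noteq> A}" "z0 \<in> Pi\<^sub>E (carrier G) U"
    "Pi\<^sub>E (carrier G) U \<subseteq> V"
    unfolding full_shift_top_def openin_product_topology_alt by auto
  define F where "F = {i \<in> carrier G. U i \<noteq> A}"
  have "x \<in> S" if x: "x \<in> Z" "\<forall>f\<in>F. x f = z0 f" for x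
  proof -
    have "x i \<in> U i" if "i \<in> carrier G" for i
      using x ZA U(2) that by (cases "i \<in> F") (auto simp: F_def PiE_iff)
    with x ZA have "x \<in> Pi\<^sub>E (carrier G) U" by (auto simp: PiE_iff)
    with U(3) V(3) x(1) show ?thesis by auto
  qed
  with U(1) V(2) show thesis by (intro that[of F]) (auto simp: F_def)
qed

context group
begin

lemma shift_act_fixed_periodic:
  assumes fixed: "shift_act G g x = x" and g: "g \<in> carrier G" and k: "k \<in> carrier G"
  shows "x (k \<otimes> g [^] (n::nat)) = x k"
proof (induction n)
  case (Suc n)
  have "x (k \<otimes> g [^] Suc n) = shift_act G g x (k \<otimes> g [^] n)"
    using g k by (simp add: shift_act_def m_assoc)
  with Suc fixed show ?case by simp
qed (use k in simp)

lemma set_mult_disjointI: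
  assumes D: "D \<subseteq> carrier G" and E: "E1 \<subseteq> carrier G" "E2 \<subseteq> carrier G"
    and apart: "E2 \<inter> (set_inv D <#> D <#> E1) = {}"
  shows "(D <#> E1) \<inter> (D <#> E2) = {}"
proof (rule equals0I)
  fix x assume "x \<in> (D <#> E1) \<inter> (D <#> E2)"
  then obtain d1 d2 e1 e2 where mem: "d1 \<in> D" "d2 \<in> D" "e1 \<in> E1" "e2 \<in> E2"
    and eq: "d1 \<otimes> e1 = d2 \<otimes> e2"
    unfolding set_mult_def by blast
  have carr: "d1 \<in> carrier G" "d2 \<in> carrier G" "e1 \<in> carrier G" "e2 \<in> carrier G"
    using mem D E by auto
  then have "e2 = inv d2 \<otimes> (d2 \<otimes> e2)" by (simp add: m_assoc[symmetric])
  also have "\<dots> = inv d2 \<otimes> d1 \<otimes> e1" using carr eq by (simp add: m_assoc)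
  finally have "e2 \<in> set_inv D <#> D <#> E1"
    using mem unfolding set_mult_def SET_INV_def by blast
  with mem apart show False by blast
qed

lemma apart_points_distinguished:
  assumes glue: "gluing_window G D Z"
    and shift: "\<forall>g\<in>carrier G. \<forall>z\<in>Z. shift_act G g z \<in> Z"
    and z: "z \<in> Z" "a \<in> carrier G" "b \<in> carrier G" "z a \<noteq> z b"
    and h: "h \<in> carrier G" "h' \<in> carrier G" and apart: "(D <#> {h}) \<inter> (D <#> {h'}) = {}"
  obtains y where "y \<in> Z" "y h \<noteq> y h'"
proof -
  let ?y1 = "shift_act G (inv h \<otimes> a) z" and ?y2 = "shift_act G (inv h' \<otimes> b) z"
  have "?y1 h = z a" "?y2 h' = z b"
    using z h by (simp_all add: shift_act_def m_assoc[symmetric])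
  moreover have "?y1 \<in> Z" "?y2 \<in> Z" using shift z h by simp_all
  ultimately show thesis
    using gluing_windowD[OF glue _ _ _ _ apart] z h that
    by (metis empty_subsetI finite.simps insert_subset singletonI)
qed

lemma inj_nat_pow_if_torsion_free:
  assumes tf: "torsion_free_group G" and g: "g \<in> carrier G" "g \<noteq> \<one>"
  shows "inj (\<lambda>n::nat. g [^] n)"
proof -
  have "g [^] i \<noteq> g [^] j" if "i < j" for i j :: nat
  proof
    assume eq: "g [^] i = g [^] j"
    have "g [^] i \<otimes> g [^] (j - i) = g [^] j"
      using that g by (simp add: nat_pow_mult)
    with eq g have "g [^] i \<otimes> g [^] (j - i) = g [^] i \<otimes> \<one>" by simp
    then have "g [^] (j - i) = \<one>" using g by simp
    with tf g that show False unfolding torsion_free_group_def by auto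
  qed
  then show ?thesis by (metis injI linorder_neqE_nat)
qed

lemma icc_conjugate_avoiding:
  assumes icc: "icc_group G" and g: "g \<in> carrier G" "g \<noteq> \<one>"
    and "finite S" "finite T"
  obtains h where "h \<in> carrier G" "h \<otimes> g \<otimes> inv h \<notin> S" "h \<notin> T" "h \<otimes> g \<notin> T"
proof -
  define B where "B = T \<union> (\<lambda>t. t \<otimes> inv g) ` T"
  have "\<not> {k \<otimes> g \<otimes> inv k | k. k \<in> carrier G} \<subseteq> S \<union> (\<lambda>k. k \<otimes> g \<otimes> inv k) ` B"
    using icc g \<open>finite S\<close> \<open>finite T\<close> finite_subset
    unfolding icc_group_def B_def by blast
  then obtain h where h: "h \<in> carrier G" "h \<otimes> g \<otimes> inv h \<notin> S" "h \<notin> B" by blast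
  moreover have "h \<otimes> g \<notin> T"
    using h g by (auto simp: B_def m_assoc intro!: image_eqI[of h _ "h \<otimes> g"])
  ultimately show thesis using that by (simp add: B_def)
qed

lemma torsion_free_power_avoiding:
  assumes tf: "torsion_free_group G" and g: "g \<in> carrier G" "g \<noteq> \<one>"
    and S: "finite S" and T: "finite T"
  obtains h n where "h \<in> carrier G" "h \<otimes> g [^] (n::nat) \<otimes> inv h \<notin> S" "h \<notin> T"
    "h \<otimes> g [^] n \<notin> T"
proof -
  have inj: "inj (\<lambda>n::nat. g [^] n)" by (rule inj_nat_pow_if_torsion_free[OF tf g])
  then have "finite {n::nat. g [^] n \<in> S}" "finite {j::nat. g [^] j \<in> T}"
    using finite_vimageI[OF S inj] finite_vimageI[OF T inj] by (simp_all add: vimage_def)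
  then obtain n :: nat where n: "g [^] n \<notin> S"
    by (metis ex_new_if_finite infinite_UNIV_nat mem_Collect_eq)
  have "inj (\<lambda>j::nat. g [^] (j + n))" using inj unfolding inj_def by (metis add_right_cancel)
  then have "finite {j::nat. g [^] (j + n) \<in> T}"
    using finite_vimageI[OF T] by (simp add: vimage_def)
  with \<open>finite {j::nat. g [^] j \<in> T}\<close> obtain j :: nat
    where j: "g [^] j \<notin> T" "g [^] (j + n) \<notin> T"
    by (metis (mono_tags) UnCI ex_new_if_finite finite_UnI infinite_UNIV_nat mem_Collect_eq)
  have "g [^] j \<otimes> g [^] n \<otimes> inv (g [^] j) = g [^] n \<otimes> g [^] j \<otimes> inv (g [^] j)"
    using g by (simp add: nat_pow_comm)
  also have "\<dots> = g [^] n" using g by (simp add: m_assoc)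
  finally have "g [^] j \<otimes> g [^] n \<otimes> inv (g [^] j) = g [^] n" .
  with g n j show thesis by (intro that[of "g [^] j" n]) (auto simp: nat_pow_mult)
qed

lemma conjugate_power_avoiding:
  assumes "icc_group G \<or> torsion_free_group G" "g \<in> carrier G" "g \<noteq> \<one>" "finite S" "finite T"
  obtains h n where "h \<in> carrier G" "h \<otimes> g [^] (n::nat) \<otimes> inv h \<notin> S" "h \<notin> T"
    "h \<otimes> g [^] n \<notin> T"
proof (cases "icc_group G")
  case True
  with assms obtain h where "h \<in> carrier G" "h \<otimes> g \<otimes> inv h \<notin> S" "h \<notin> T" "h \<otimes> g \<notin> T"
    by (blast elim: icc_conjugate_avoiding)
  with assms(2) show thesis by (intro that[of h 1]) simp_all
next
  case False
  with assms show thesis by (blast elim: torsion_free_power_avoiding intro: that)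
qed

lemma cylinder_not_shift_fixed:
  assumes groups: "icc_group G \<or> torsion_free_group G"
    and D: "finite D" "D \<subseteq> carrier G" and glue: "gluing_window G D Z"
    and shift: "\<forall>g\<in>carrier G. \<forall>z\<in>Z. shift_act G g z \<in> Z"
    and z: "z \<in> Z" "a \<in> carrier G" "b \<in> carrier G" "z a \<noteq> z b"
    and F: "finite F" "F \<subseteq> carrier G" and z0: "z0 \<in> Z"
    and g: "g \<in> carrier G" "g \<noteq> \<one>"
  obtains x where "x \<in> Z" "\<forall>f\<in>F. x f = z0 f" "shift_act G g x \<noteq> x"
proof -
  define Q where "Q = set_inv D <#> D"
  have Q: "finite Q" "Q \<subseteq> carrier G"
    using D by (auto simp: Q_def set_mult_def SET_INV_def)
  have "finite (Q <#> F)"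
    using Q F by (simp add: set_mult_def)
  then obtain h n where h: "h \<in> carrier G" "h \<otimes> g [^] (n::nat) \<otimes> inv h \<notin> Q"
    "h \<notin> Q <#> F" "h \<otimes> g [^] n \<notin> Q <#> F"
    by (rule conjugate_power_avoiding[OF groups g Q(1)]) blast
  let ?h' = "h \<otimes> g [^] n"
  have h': "?h' \<in> carrier G" using g h by simp
  have "?h' \<notin> Q <#> {h}"
  proof
    assume "?h' \<in> Q <#> {h}"
    then obtain q where q: "q \<in> Q" "?h' = q \<otimes> h" unfolding set_mult_def by blast
    with Q h have "?h' \<otimes> inv h = q" by (simp add: m_assoc subsetD)
    with q h show False by simp
  qed
  then have "(D <#> {h}) \<inter> (D <#> {?h'}) = {}"
    using D h h' unfolding Q_def by (intro set_mult_disjointI) auto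
  with glue shift z h(1) h' obtain y where y: "y \<in> Z" "y h \<noteq> y ?h'"
    by (rule apart_points_distinguished) blast
  have E: "finite {h, ?h'}" "{h, ?h'} \<subseteq> carrier G" using h h' by auto
  have "(D <#> F) \<inter> (D <#> {h, ?h'}) = {}"
    using D F E h unfolding Q_def by (intro set_mult_disjointI) auto
  then obtain x where x: "x \<in> Z" "\<And>f. f \<in> F \<Longrightarrow> x f = z0 f"
    "\<And>k. k \<in> {h, ?h'} \<Longrightarrow> x k = y k"
    using gluing_windowD[OF glue F(1) E(1) F(2) E(2) _ z0 y(1)] by blast
  have "shift_act G g x \<noteq> x"
    using shift_act_fixed_periodic[OF _ g(1) h(1), of x n] x(3) y(2) by auto
  with x(1,2) show thesis by (intro that) auto
qed

lemma interior_of_shift_fixed_points_empty: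
  assumes groups: "icc_group G \<or> torsion_free_group G"
    and sub: "subshift G A Z" and si: "strongly_irreducible G Z"
    and z: "z \<in> Z" "a \<in> carrier G" "b \<in> carrier G" "z a \<noteq> z b"
    and g: "g \<in> carrier G" "g \<noteq> \<one>"
  shows "subtopology (full_shift_top G A) Z interior_of {x \<in> Z. shift_act G g x = x} = {}"
proof (rule ccontr)
  have ZA: "Z \<subseteq> (\<Pi>\<^sub>E h\<in>carrier G. A)"
    and shift: "\<forall>g\<in>carrier G. \<forall>z\<in>Z. shift_act G g z \<in> Z"
    using sub by (auto simp: subshift_def)
  assume "\<not> ?thesis"
  then obtain z0
    where "z0 \<in> subtopology (full_shift_top G A) Z interior_of {x \<in> Z. shift_act G g x = x}"
    by blast
  then obtain F where F: "finite F" "F \<subseteq> carrier G" "z0 \<in> Z"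
    and fixed: "\<And>x. x \<in> Z \<Longrightarrow> \<forall>f\<in>F. x f = z0 f \<Longrightarrow> x \<in> {x \<in> Z. shift_act G g x = x}"
    by (rule interior_of_shift_space_contains_cylinder[OF ZA]) blast
  from si obtain D where "finite D" "D \<subseteq> carrier G" "gluing_window G D Z"
    unfolding strongly_irreducible_iff_gluing_window by blast
  with groups shift z F g obtain x where "x \<in> Z" "\<forall>f\<in>F. x f = z0 f" "shift_act G g x \<noteq> x"
    by (elim cylinder_not_shift_fixed)
  with fixed show False by blast
qed

end

theorem proposition5p5:
  fixes G :: "('g, 'm) monoid_scheme" and A :: "'a set" and Z :: "('g \<Rightarrow> 'a) set"
  assumes "group G"
    and "countable (carrier G)"
    and "icc_group G \<or> torsion_free_group G"
    and "finite A"
    and "subshift G A Z"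
    and "strongly_irreducible G Z"
    and "\<exists>z\<in>Z. \<exists>g\<in>carrier G. \<exists>h\<in>carrier G. z g \<noteq> z h"
  shows "essentially_free G A Z"
proof -
  interpret group G by fact
  from assms(7) obtain z a b where z: "z \<in> Z" "a \<in> carrier G" "b \<in> carrier G" "z a \<noteq> z b"
    by blast
  show ?thesis
    unfolding essentially_free_def
    using interior_of_shift_fixed_points_empty[OF assms(3,5,6) z] by blast
qed

end
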